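(* Let $(X,\Sigma,\tau,(\chi_A)_{A\in AP})$ be a labelled Markov process viewed as a Feller-Dynkin process on $E=X\times[0,1)$. If $R$ is a bisimulation on $E$, then its time-coherent closure $time(R)$ is also a bisimulation.
   Context: A labelled Markov process (LMP) $(X,\Sigma,\tau,(\chi_A)_{A\in AP})$ consists of a measurable space $(X,\Sigma)$, a Markov kernel $\tau:X\times\Sigma\to[0,1]$ (measurable in the first argument, a subprobability measure in the second), and characteristic functions $\chi_A$ of subsets of $X$ for atomic propositions $A\in AP=\{A_1,A_2,\dots\}$. The LMP is viewed as a process on $E=X\times[0,1)$ with $\sigma$-algebra $\Sigma\otimes\mathcal{B}([0,1))$ via kernels $P_t((x,s),C)=\tau_{\lfloor t+s\rfloor}(x,C')$, $C'=\{z:(z,t+s-\lfloor t+s\rfloor)\in C\}$, $\tau_0(x,C)=\delta_C(x)$, $\tau_1=\tau$, $\tau_{k+1}(x,C)=\int_X\tau(x,dy)\tau_k(y,C)$; observation $obs(x,s)$ has $i$-th component $\chi_{A_i}(x)$. With $E_\partial=E\uplus\{\partial\}$, trajectories are cadlag maps $\omega:[0,\infty)\to E_\partial$ with $\partial$ absorbing, $\Omega$ is the set of trajectories, $\mathcal{G}=\sigma(\omega\mapsto\omega(s):s\ge0)$, and $\mathbb{P}^z$ is determined by $\mathbb{P}^z(\omega(0)\in dx_0,\omega(t_1)\in dx_1,\dots,\omega(t_n)\in dx_n)=\delta_z(dx_0)P^{+\partial}_{t_1}(x_0,dx_1)\cdots P^{+\partial}_{t_n-t_{n-1}}(x_{n-1},dx_n)$,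 where $P^{+\partial}_t(z,\{\partial\})=1-P_t(z,E)$, $P^{+\partial}_t(\partial,\{\partial\})=1$; $obs(\partial)=\partial$. An equivalence $R$ on $E$ is a bisimulation if whenever $z\,R\,w$: $obs(z)=obs(w)$, and $\mathbb{P}^z(B)=\mathbb{P}^w(B)$ for every $R$-closed $B\in\mathcal{G}$, where $B$ is $R$-closed if $\omega\in B$ and $\omega(t)\,R\,\omega'(t)$ for all $t\ge0$ ($\partial$ related to itself) imply $\omega'\in B$. An equivalence $R$ on $E$ is time-coherent if for all $x,y\in X$ and $0\le t<1$, $(x,t)\,R\,(y,t)$ implies $(x,s)\,R\,(y,s)$ for all $s\in[0,1)$. The time-coherent closure $time(R)$ of an equivalence $R$ on $E$ is the smallest time-coherent equivalence containing $R$. *)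

theory Defs
  imports "HOL-Probability.Probability"
begin

text \<open>The LMP: a measurable space M (carrier X = space M, sigma-algebra sets M),
  a Markov kernel tau : X \<rightarrow> subprobability measures on M, and labels chi i (i-th
  atomic proposition A_i, characteristic function of a subset of X).\<close>

definition lmp :: "'x measure \<Rightarrow> ('x \<Rightarrow> 'x measure) \<Rightarrow> bool" where
  "lmp M \<tau> \<longleftrightarrow> \<tau> \<in> M \<rightarrow>\<^sub>M subprob_algebra M"

primrec tauk :: "'x measure \<Rightarrow> ('x \<Rightarrow> 'x measure) \<Rightarrow> nat \<Rightarrow> 'x \<Rightarrow> 'x measure" where
  "tauk M \<tau> 0 x = return M x"
| "tauk M \<tau> (Suc k) x = bind (\<tau> x) (\<lambda>y. tauk M \<tau> k y)"

definition Emeas :: "'x measure \<Rightarrow> ('x \<times> real) measure" where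
  "Emeas M = M \<Otimes>\<^sub>M restrict_space borel {0..<1::real}"

text \<open>E_partial = E plus a cemetery point; the cemetery is None.\<close>
definition Ed :: "'x measure \<Rightarrow> ('x \<times> real) option measure" where
  "Ed M = sigma (insert None (Some ` space (Emeas M)))
                ({Some ` A | A. A \<in> sets (Emeas M)} \<union> {{None}})"

definition Pd :: "'x measure \<Rightarrow> ('x \<Rightarrow> 'x measure) \<Rightarrow> real \<Rightarrow> ('x \<times> real) option
                   \<Rightarrow> ('x \<times> real) option measure" where
  "Pd M \<tau> t w = (case w of
      None \<Rightarrow> return (Ed M) None
    | Some (x, s) \<Rightarrow>
        measure_of (space (Ed M)) (sets (Ed M))
          (\<lambda>C. emeasure (tauk M \<tau> (nat \<lfloor>t + s\<rfloor>) x) {y \<in> space M. Some (y, frac (t + s)) \<in> C}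
               + (1 - emeasure (tauk M \<tau> (nat \<lfloor>t + s\<rfloor>) x) (space M)) * indicator C None))"

fun fdd :: "'x measure \<Rightarrow> ('x \<Rightarrow> 'x measure) \<Rightarrow> ('x \<times> real) option \<Rightarrow> real
              \<Rightarrow> (real \<times> ('x \<times> real) option set) list \<Rightarrow> ennreal" where
  "fdd M \<tau> w t0 [] = 1"
| "fdd M \<tau> w t0 ((t, A) # rest) =
     (\<integral>\<^sup>+ y. indicator A y * fdd M \<tau> y t rest \<partial>(Pd M \<tau> (t - t0) w))"

text \<open>Topology: X discrete, [0,1) Euclidean, E_partial the one-point (Alexandroff)
  compactification of E with the cemetery as point at infinity.\<close>
definition topE :: "'x measure \<Rightarrow> ('x \<times> real) topology" where
  "topE M = prod_topology (discrete_topology (space M)) (top_of_set {0..<1::real})"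

definition topEd :: "'x measure \<Rightarrow> ('x \<times> real) option topology" where
  "topEd M = topology (\<lambda>V. V \<subseteq> insert None (Some ` topspace (topE M))
       \<and> openin (topE M) (Some -` V)
       \<and> (None \<in> V \<longrightarrow> compactin (topE M) (topspace (topE M) - Some -` V)))"

definition cadlag :: "'a topology \<Rightarrow> (real \<Rightarrow> 'a) \<Rightarrow> bool" where
  "cadlag T \<omega> \<longleftrightarrow> (\<forall>t\<ge>0. limitin T \<omega> (\<omega> t) (at_right t))
                 \<and> (\<forall>t>0. \<exists>l. limitin T \<omega> l (at_left t))"

text \<open>Trajectories: cadlag maps [0,infinity) \<rightarrow> E_partial with the cemetery absorbing;
  they are extended by the cemetery to negative times (a normalisation only).\<close>
definition Traj :: "'x measure \<Rightarrow> (real \<Rightarrow> ('x \<times> real) option) set" where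
  "Traj M = {\<omega>. (\<forall>t\<ge>0. \<omega> t \<in> insert None (Some ` space (Emeas M)))
               \<and> (\<forall>t<0. \<omega> t = None)
               \<and> (\<forall>t\<ge>0. \<omega> t = None \<longrightarrow> (\<forall>t'\<ge>t. \<omega> t' = None))
               \<and> cadlag (topEd M) \<omega>}"

definition Gm :: "'x measure \<Rightarrow> (real \<Rightarrow> ('x \<times> real) option) measure" where
  "Gm M = sigma (Traj M) {{\<omega> \<in> Traj M. \<omega> s \<in> A} | s A. 0 \<le> s \<and> A \<in> sets (Ed M)}"

definition trajectory_laws :: "'x measure \<Rightarrow> ('x \<Rightarrow> 'x measure)
      \<Rightarrow> ('x \<times> real \<Rightarrow> (real \<Rightarrow> ('x \<times> real) option) measure) \<Rightarrow> bool" where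
  "trajectory_laws M \<tau> PP \<longleftrightarrow> (\<forall>z \<in> space (Emeas M).
      sets (PP z) = sets (Gm M)
    \<and> (\<forall>xs. sorted (map fst xs) \<and> (\<forall>(t, A) \<in> set xs. 0 \<le> t \<and> A \<in> sets (Ed M)) \<longrightarrow>
         emeasure (PP z) {\<omega> \<in> Traj M. \<forall>(t, A) \<in> set xs. \<omega> t \<in> A} = fdd M \<tau> (Some z) 0 xs))"

definition lmp_obs :: "(nat \<Rightarrow> 'x \<Rightarrow> bool) \<Rightarrow> 'x \<times> real \<Rightarrow> (nat \<Rightarrow> bool)" where
  "lmp_obs lab z = (\<lambda>i. lab i (fst z))"

definition rel_d :: "(('x \<times> real) \<times> ('x \<times> real)) set \<Rightarrow> ('x \<times> real) option \<Rightarrow> ('x \<times> real) option \<Rightarrow> bool" where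
  "rel_d R a b \<longleftrightarrow> (a = None \<and> b = None) \<or> (\<exists>z w. a = Some z \<and> b = Some w \<and> (z, w) \<in> R)"

definition R_closed :: "'x measure \<Rightarrow> (('x \<times> real) \<times> ('x \<times> real)) set
      \<Rightarrow> (real \<Rightarrow> ('x \<times> real) option) set \<Rightarrow> bool" where
  "R_closed M R B \<longleftrightarrow> (\<forall>\<omega> \<in> B. \<forall>\<omega>' \<in> Traj M. (\<forall>t\<ge>0. rel_d R (\<omega> t) (\<omega>' t)) \<longrightarrow> \<omega>' \<in> B)"

definition is_bisimulation :: "'x measure \<Rightarrow> (nat \<Rightarrow> 'x \<Rightarrow> bool)
      \<Rightarrow> ('x \<times> real \<Rightarrow> (real \<Rightarrow> ('x \<times> real) option) measure)
      \<Rightarrow> (('x \<times> real) \<times> ('x \<times> real)) set \<Rightarrow> bool" where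
  "is_bisimulation M lab PP R \<longleftrightarrow> equiv (space (Emeas M)) R \<and>
     (\<forall>(z, w) \<in> R. lmp_obs lab z = lmp_obs lab w \<and>
        (\<forall>B \<in> sets (Gm M). R_closed M R B \<longrightarrow> emeasure (PP z) B = emeasure (PP w) B))"

definition time_coherent :: "(('x \<times> real) \<times> ('x \<times> real)) set \<Rightarrow> bool" where
  "time_coherent R \<longleftrightarrow> (\<forall>x y t. 0 \<le> t \<and> t < 1 \<and> ((x, t), (y, t)) \<in> R \<longrightarrow>
        (\<forall>s. 0 \<le> s \<and> s < 1 \<longrightarrow> ((x, s), (y, s)) \<in> R))"

definition time_closure :: "'x measure \<Rightarrow> (('x \<times> real) \<times> ('x \<times> real)) set
      \<Rightarrow> (('x \<times> real) \<times> ('x \<times> real)) set" where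
  "time_closure M R = \<Inter>{S. equiv (space (Emeas M)) S \<and> time_coherent S \<and> R \<subseteq> S}"

end

theory Submission
  imports Defs
begin

text \<open>Let \<open>S = time(R)\<close> and let \<open>T\<subseteq>S\<close> consist of the pairs with equal observations whose laws
  agree on all \<open>S\<close>-closed events. \<open>T\<close> is an equivalence containing \<open>R\<close>; once it is shown to be
  time-coherent, minimality of \<open>S\<close> gives \<open>S \<subseteq> T\<close>, i.e. \<open>S\<close> is a bisimulation.

  Let \<open>(x,t) T (y,t)\<close> and \<open>s \<in> [0,1)\<close>. If \<open>t \<le> s\<close>, the law from \<open>(x,s)\<close> is the image of the law
  from \<open>(x,t)\<close> under the time shift by \<open>s - t\<close>, which preserves \<open>S\<close>-closedness. If \<open>s < t\<close>, the law
  from \<open>(x,s)\<close> is the image of the law from \<open>(x,t)\<close> under the map that prepends the deterministic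
  motion from \<open>(x,s)\<close> to \<open>(x,t)\<close>. By time coherence of \<open>S\<close> this motion is pointwise \<open>S\<close>-related to
  the one from \<open>(y,s)\<close> to \<open>(y,t)\<close>, so an \<open>S\<close>-closed event has the same \<open>S\<close>-closed preimage under
  both maps.\<close>

lemma Ed_generators_Pow:
  "{Some ` A | A. A \<in> sets (Emeas M)} \<union> {{None}} \<subseteq> Pow (insert None (Some ` space (Emeas M)))"
  using sets.sets_into_space by fastforce

lemma space_Ed: "space (Ed M) = insert None (Some ` space (Emeas M))"
  unfolding Ed_def by (rule space_measure_of[OF Ed_generators_Pow])

lemma sets_Ed:
  "sets (Ed M) = sigma_sets (insert None (Some ` space (Emeas M)))
                   ({Some ` A | A. A \<in> sets (Emeas M)} \<union> {{None}})"
  unfolding Ed_def by (rule sets_measure_of[OF Ed_generators_Pow])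

lemma Some_image_in_sets_Ed: "A \<in> sets (Emeas M) \<Longrightarrow> Some ` A \<in> sets (Ed M)"
  unfolding sets_Ed by (rule sigma_sets.Basic) blast

lemma None_in_sets_Ed: "{None} \<in> sets (Ed M)"
  unfolding sets_Ed by (rule sigma_sets.Basic) blast

lemma space_Emeas: "space (Emeas M) = space M \<times> {0..<1}"
  by (simp add: Emeas_def space_pair_measure)

lemma measurable_Some_Ed: "Some \<in> Emeas M \<rightarrow>\<^sub>M Ed M"
  unfolding Ed_def
proof (rule measurable_measure_of[OF Ed_generators_Pow])
  show "Some \<in> space (Emeas M) \<rightarrow> insert None (Some ` space (Emeas M))" by blast
  fix A assume "A \<in> {Some ` A |A. A \<in> sets (Emeas M)} \<union> {{None}}"
  then consider B where "A = Some ` B" "B \<in> sets (Emeas M)" | "A = {None}" by blast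
  then show "Some -` A \<inter> space (Emeas M) \<in> sets (Emeas M)"
  proof cases
    case 1
    then have "Some -` A \<inter> space (Emeas M) = B"
      using sets.sets_into_space[OF 1(2)] by blast
    then show ?thesis using 1 by simp
  next
    case 2
    then have "Some -` A \<inter> space (Emeas M) = {}" by blast
    then show ?thesis by simp
  qed
qed

lemma measurable_EdI:
  assumes "(\<lambda>z. h (Some z)) \<in> Emeas M \<rightarrow>\<^sub>M N" and "h None \<in> space N"
  shows "h \<in> Ed M \<rightarrow>\<^sub>M N"
proof (rule measurableI)
  fix w assume "w \<in> space (Ed M)"
  then show "h w \<in> space N" using assms measurable_space[OF assms(1)] by (auto simp: space_Ed)
next
  fix A assume A: "A \<in> sets N"
  have eq: "h -` A \<inter> space (Ed M) =
      Some ` ((\<lambda>z. h (Some z)) -` A \<inter> space (Emeas M)) \<union> (if h None \<in> A then {None} else {})"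
    by (auto simp: space_Ed)
  have "Some ` ((\<lambda>z. h (Some z)) -` A \<inter> space (Emeas M)) \<in> sets (Ed M)"
    using measurable_sets[OF assms(1) A] by (rule Some_image_in_sets_Ed)
  moreover have "(if h None \<in> A then {None} else {}) \<in> sets (Ed M)"
    using None_in_sets_Ed[of M] by simp
  ultimately show "h -` A \<inter> space (Ed M) \<in> sets (Ed M)"
    unfolding eq by (rule sets.Un)
qed

lemma measurable_Some_Pair_Ed:
  assumes "f \<in> N \<rightarrow>\<^sub>M M" and "g \<in> N \<rightarrow>\<^sub>M borel" and "\<And>w. w \<in> space N \<Longrightarrow> g w \<in> {0..<1::real}"
  shows "(\<lambda>w. Some (f w, g w)) \<in> N \<rightarrow>\<^sub>M Ed M"
proof -
  have "g \<in> N \<rightarrow>\<^sub>M restrict_space borel {0..<1::real}"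
    using assms(2,3) by (intro measurable_restrict_space2) auto
  with assms(1) have "(\<lambda>w. (f w, g w)) \<in> N \<rightarrow>\<^sub>M Emeas M"
    unfolding Emeas_def by (rule measurable_Pair)
  then show ?thesis using measurable_Some_Ed by (rule measurable_compose)
qed

lemma measurable_frac [measurable]: "(frac :: real \<Rightarrow> real) \<in> borel_measurable borel"
  unfolding frac_def by measurable

lemma measurable_snd_Emeas [measurable]: "snd \<in> Emeas M \<rightarrow>\<^sub>M borel"
  unfolding Emeas_def
  by (rule measurable_compose[OF measurable_snd measurable_restrict_space1[OF measurable_ident_sets[OF refl]]])

section \<open>The transition kernels\<close>

lemma measurable_tauk:
  assumes "lmp M \<tau>"
  shows "tauk M \<tau> k \<in> M \<rightarrow>\<^sub>M subprob_algebra M"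
proof (induction k)
  case 0
  then show ?case using return_measurable[of M] by (simp add: tauk.simps(1)[abs_def])
next
  case (Suc k)
  have "(\<lambda>x. bind (\<tau> x) (tauk M \<tau> k)) \<in> M \<rightarrow>\<^sub>M subprob_algebra M"
    using assms Suc unfolding lmp_def by (rule measurable_bind2)
  then show ?case by (simp add: tauk.simps(2)[abs_def])
qed

lemma countably_additive_add_point_mass:
  assumes "\<And>C. C \<in> sets D \<Longrightarrow> f C = emeasure D C + c * indicator C a"
  shows "countably_additive (sets D) f"
  unfolding countably_additive_def
proof (intro allI impI)
  fix A :: "nat \<Rightarrow> _"
  assume A: "range A \<subseteq> sets D" "disjoint_family A" "\<Union> (range A) \<in> sets D"
  then have "(\<Sum>i. f (A i)) = (\<Sum>i. emeasure D (A i) + c * indicator (A i) a)"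
    by (simp add: assms subset_eq)
  also have "\<dots> = (\<Sum>i. emeasure D (A i)) + (\<Sum>i. c * indicator (A i) a)"
    by (rule suminf_add[symmetric]) auto
  also have "\<dots> = f (\<Union> (range A))"
    using A by (simp add: assms suminf_emeasure suminf_indicator)
  finally show "(\<Sum>i. f (A i)) = f (\<Union> (range A))" .
qed

lemma emeasure_Pd_Some:
  assumes lmp: "lmp M \<tau>" and x: "x \<in> space M" and C: "C \<in> sets (Ed M)"
  shows "emeasure (Pd M \<tau> t (Some (x, s))) C =
           emeasure (tauk M \<tau> (nat \<lfloor>t + s\<rfloor>) x) {y \<in> space M. Some (y, frac (t + s)) \<in> C}
           + (1 - emeasure (tauk M \<tau> (nat \<lfloor>t + s\<rfloor>) x) (space M)) * indicator C None"
    (is "_ = ?F C")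
proof -
  define \<nu> where "\<nu> = tauk M \<tau> (nat \<lfloor>t + s\<rfloor>) x"
  define g where "g = (\<lambda>y::'a. Some (y, frac (t + s)))"
  have sets_\<nu>: "sets \<nu> = sets M"
    unfolding \<nu>_def by (rule sets_kernel[OF measurable_tauk[OF lmp] x])
  have "g \<in> M \<rightarrow>\<^sub>M Ed M"
    unfolding g_def by (rule measurable_Some_Pair_Ed) (auto simp: frac_lt_1)
  then have g: "g \<in> \<nu> \<rightarrow>\<^sub>M Ed M" by (simp add: measurable_cong_sets[OF sets_\<nu> refl])
  have F_eq: "?F C = emeasure (distr \<nu> (Ed M) g) C + (1 - emeasure \<nu> (space M)) * indicator C None"
    if "C \<in> sets (Ed M)" for C
  proof -
    have "g -` C \<inter> space \<nu> = {y \<in> space M. Some (y, frac (t + s)) \<in> C}"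
      by (auto simp: sets_eq_imp_space_eq[OF sets_\<nu>] g_def)
    then show ?thesis using emeasure_distr[OF g that] by (simp add: \<nu>_def)
  qed
  have "countably_additive (sets (distr \<nu> (Ed M) g)) ?F"
    by (rule countably_additive_add_point_mass[where c = "1 - emeasure \<nu> (space M)" and a = None])
       (simp add: F_eq)
  then have "countably_additive (sets (Ed M)) ?F" by simp
  moreover have "positive (sets (Ed M)) ?F"
    by (simp add: positive_def)
  ultimately show ?thesis
    using emeasure_measure_of_sigma[OF sets.sigma_algebra_axioms _ _ C] by (simp add: Pd_def)
qed

lemma sets_Pd: "sets (Pd M \<tau> t w) = sets (Ed M)"
  by (cases w) (auto simp: Pd_def)

lemma prob_space_Pd:
  assumes lmp: "lmp M \<tau>" and w: "w \<in> space (Ed M)"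
  shows "prob_space (Pd M \<tau> t w)"
proof (cases w)
  case None
  then show ?thesis by (simp add: Pd_def prob_space_return space_Ed)
next
  case (Some z)
  then obtain x s where w_eq: "w = Some (x, s)" and x: "x \<in> space M" and s: "s \<in> {0..<1}"
    using w by (cases z) (auto simp: space_Ed space_Emeas)
  define \<nu> where "\<nu> = tauk M \<tau> (nat \<lfloor>t + s\<rfloor>) x"
  have "subprob_space \<nu>" unfolding \<nu>_def by (rule subprob_space_kernel[OF measurable_tauk[OF lmp] x])
  then have le_1: "emeasure \<nu> (space M) \<le> 1"
    by (rule subprob_space.subprob_emeasure_le_1)
  have "{y \<in> space M. Some (y, frac (t + s)) \<in> space (Ed M)} = space M"
    by (auto simp: space_Ed space_Emeas frac_lt_1)
  then have "emeasure (Pd M \<tau> t w) (space (Ed M)) = emeasure \<nu> (space M) + (1 - emeasure \<nu> (space M))"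
    using emeasure_Pd_Some[OF lmp x sets.top[of "Ed M"]] by (simp add: w_eq \<nu>_def space_Ed)
  also have "\<dots> = 1" using le_1
    by (metis add_diff_inverse_ennreal)
  finally show ?thesis
    by (intro prob_spaceI) (simp add: sets_eq_imp_space_eq[OF sets_Pd])
qed

lemma measurable_emeasure_tauk_section:
  assumes lmp: "lmp M \<tau>" and C: "C \<in> sets (Ed M)"
  shows "(\<lambda>z. emeasure (tauk M \<tau> n (fst z)) {y \<in> space M. Some (y, frac (t + snd z)) \<in> C})
    \<in> borel_measurable (Emeas M)"
proof (rule emeasure_measurable_subprob_algebra2)
  show "(\<lambda>z. tauk M \<tau> n (fst z)) \<in> Emeas M \<rightarrow>\<^sub>M subprob_algebra M"
    unfolding Emeas_def by (rule measurable_compose[OF measurable_fst measurable_tauk[OF lmp]])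
  have "(\<lambda>p. Some (snd p, frac (t + snd (fst p)))) \<in> Emeas M \<Otimes>\<^sub>M M \<rightarrow>\<^sub>M Ed M"
    by (rule measurable_Some_Pair_Ed) (auto simp: frac_lt_1)
  from measurable_sets[OF this C]
  show "(SIGMA z:space (Emeas M). {y \<in> space M. Some (y, frac (t + snd z)) \<in> C}) \<in> sets (Emeas M \<Otimes>\<^sub>M M)"
    by (rule back_subst) (auto simp: space_pair_measure)
qed

lemma measurable_Pd:
  assumes lmp: "lmp M \<tau>"
  shows "Pd M \<tau> t \<in> Ed M \<rightarrow>\<^sub>M subprob_algebra (Ed M)"
proof (rule measurable_subprob_algebra)
  fix w assume "w \<in> space (Ed M)"
  then show "subprob_space (Pd M \<tau> t w)"
    using prob_space_Pd[OF lmp] prob_space_imp_subprob_space by blast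
next
  fix C assume C: "C \<in> sets (Ed M)"
  show "(\<lambda>w. emeasure (Pd M \<tau> t w) C) \<in> borel_measurable (Ed M)"
  proof (rule measurable_EdI)
    define F where "F = (\<lambda>n (z::'a \<times> real).
      emeasure (tauk M \<tau> n (fst z)) {y \<in> space M. Some (y, frac (t + snd z)) \<in> C}
      + (1 - emeasure (tauk M \<tau> n (fst z)) (space M)) * indicator C None)"
    have "(\<lambda>z. emeasure (tauk M \<tau> n (fst z)) (space M)) \<in> borel_measurable (Emeas M)" for n
      unfolding Emeas_def
      by (rule measurable_emeasure_kernel[OF measurable_compose[OF measurable_fst measurable_tauk[OF lmp]]])
         simp
    with measurable_emeasure_tauk_section[OF lmp C]
    have "F n \<in> borel_measurable (Emeas M)" for n
      unfolding F_def by measurable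
    moreover have "(\<lambda>z. nat \<lfloor>t + snd z\<rfloor>) \<in> Emeas M \<rightarrow>\<^sub>M count_space UNIV"
      by measurable
    ultimately have "(\<lambda>z. F (nat \<lfloor>t + snd z\<rfloor>) z) \<in> borel_measurable (Emeas M)"
      by (rule measurable_compose_countable)
    then show "(\<lambda>z. emeasure (Pd M \<tau> t (Some z)) C) \<in> borel_measurable (Emeas M)"
      by (rule measurable_cong[THEN iffD1, rotated])
         (auto simp: emeasure_Pd_Some[OF lmp _ C] F_def space_Emeas)
  qed simp
qed (rule sets_Pd)

lemma measurable_fdd:
  assumes lmp: "lmp M \<tau>" and "\<forall>(t, A) \<in> set xs. A \<in> sets (Ed M)"
  shows "(\<lambda>w. fdd M \<tau> w t0 xs) \<in> borel_measurable (Ed M)"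
  using assms(2)
proof (induction xs arbitrary: t0)
  case (Cons p xs)
  obtain t A where p: "p = (t, A)" by force
  with Cons have "A \<in> sets (Ed M)" and "(\<lambda>w. fdd M \<tau> w t xs) \<in> borel_measurable (Ed M)"
    by auto
  then have "(\<lambda>w. indicator A w * fdd M \<tau> w t xs) \<in> borel_measurable (Ed M)"
    by measurable
  then have "(\<lambda>w. \<integral>\<^sup>+ y. indicator A y * fdd M \<tau> y t xs \<partial>Pd M \<tau> (t - t0) w) \<in> borel_measurable (Ed M)"
    by (rule measurable_compose[OF measurable_Pd[OF lmp] nn_integral_measurable_subprob_algebra])
  then show ?case by (simp add: p)
qed simp

lemma Pd_Some_eq_return:
  assumes lmp: "lmp M \<tau>" and x: "x \<in> space M" and "0 \<le> s + t" and "s + t < 1"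
  shows "Pd M \<tau> t (Some (x, s)) = return (Ed M) (Some (x, s + t))"
proof (rule measure_eqI)
  fix C assume "C \<in> sets (Pd M \<tau> t (Some (x, s)))"
  then have C: "C \<in> sets (Ed M)" by (simp add: sets_Pd)
  have floor: "nat \<lfloor>t + s\<rfloor> = 0" and frac: "frac (t + s) = s + t"
    using assms by (simp_all add: floor_eq_iff frac_eq add.commute)
  have "(\<lambda>y. Some (y, s + t)) \<in> M \<rightarrow>\<^sub>M Ed M"
    by (rule measurable_Some_Pair_Ed) (use assms in auto)
  from measurable_sets[OF this C] have "{y \<in> space M. Some (y, s + t) \<in> C} \<in> sets M"
    by (rule back_subst) auto
  then show "emeasure (Pd M \<tau> t (Some (x, s))) C = emeasure (return (Ed M) (Some (x, s + t))) C"
    using emeasure_Pd_Some[OF lmp x C] x C by (simp add: floor frac split: split_indicator)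
qed (simp add: sets_Pd)

lemma Pd_Some_shift: "t + s = t' + s' \<Longrightarrow> Pd M \<tau> t (Some (x, s)) = Pd M \<tau> t' (Some (x, s'))"
  by (simp add: Pd_def)

lemma fdd_time_origin:
  assumes "s - t0 = s' - t0'"
  shows "fdd M \<tau> (Some (x, s)) t0 xs = fdd M \<tau> (Some (x, s')) t0' xs"
proof -
  have "Pd M \<tau> (u - t0) (Some (x, s)) = Pd M \<tau> (u - t0') (Some (x, s'))" for u
    by (rule Pd_Some_shift) (use assms in simp)
  then show ?thesis by (cases xs) auto
qed

lemma fdd_translate:
  "fdd M \<tau> w t0 xs = fdd M \<tau> w (t0 + c) (map (\<lambda>(u, A). (u + c, A)) xs)"
  by (induction xs arbitrary: w t0) auto

lemma istopology_one_point_compactification: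
  "istopology (\<lambda>V. V \<subseteq> insert None (Some ` topspace T) \<and> openin T (Some -` V)
       \<and> (None \<in> V \<longrightarrow> compactin T (topspace T - Some -` V)))"
proof -
  define P where "P = (\<lambda>V. V \<subseteq> insert None (Some ` topspace T) \<and> openin T (Some -` V)
       \<and> (None \<in> V \<longrightarrow> compactin T (topspace T - Some -` V)))"
  have "P (U \<inter> V)" if "P U" and "P V" for U V
  proof -
    have "topspace T - Some -` (U \<inter> V) = (topspace T - Some -` U) \<union> (topspace T - Some -` V)"
      by auto
    with that show ?thesis by (auto simp: P_def openin_Int intro: compactin_Un)
  qed
  moreover have "P (\<Union>K)" if K: "\<forall>V\<in>K. P V" for K
  proof -
    have "Some -` \<Union>K = (\<Union>V\<in>K. Some -` V)" by auto
    then have open_K: "openin T (Some -` \<Union>K)" using K by (auto simp: P_def)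
    have "compactin T (topspace T - Some -` \<Union>K)" if "None \<in> \<Union>K"
    proof -
      from that obtain V where "V \<in> K" and "None \<in> V" by auto
      then have "compactin T (topspace T - Some -` V)" using K by (auto simp: P_def)
      moreover have "topspace T - Some -` \<Union>K \<subseteq> topspace T - Some -` V" using \<open>V \<in> K\<close> by auto
      ultimately show ?thesis using open_K by (auto intro: closed_compactin)
    qed
    with K open_K show ?thesis by (auto simp: P_def)
  qed
  ultimately show ?thesis unfolding P_def[symmetric] istopology_def by blast
qed

lemma openin_topEd:
  "openin (topEd M) = (\<lambda>V. V \<subseteq> insert None (Some ` topspace (topE M))
       \<and> openin (topE M) (Some -` V)
       \<and> (None \<in> V \<longrightarrow> compactin (topE M) (topspace (topE M) - Some -` V)))"
  unfolding topEd_def by (rule topology_inverse'[OF istopology_one_point_compactification])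

lemma topspace_topEd: "topspace (topEd M) = insert None (Some ` topspace (topE M))"
proof
  show "topspace (topEd M) \<subseteq> insert None (Some ` topspace (topE M))"
    using openin_topspace[of "topEd M"] by (simp add: openin_topEd)
  have "Some -` insert None (Some ` topspace (topE M)) = topspace (topE M)" by auto
  then have "openin (topEd M) (insert None (Some ` topspace (topE M)))"
    by (simp add: openin_topEd)
  then show "insert None (Some ` topspace (topE M)) \<subseteq> topspace (topEd M)"
    by (rule openin_subset)
qed

lemma limitin_Some_topEd:
  assumes "limitin (topE M) f l F"
  shows "limitin (topEd M) (\<lambda>u. Some (f u)) (Some l) F"
  unfolding limitin_def
proof (intro conjI allI impI)
  show "Some l \<in> topspace (topEd M)"
    using limitin_topspace[OF assms] by (simp add: topspace_topEd)
  fix U assume "openin (topEd M) U \<and> Some l \<in> U"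
  then have "openin (topE M) (Some -` U)" and "l \<in> Some -` U" by (simp_all add: openin_topEd)
  with assms have "eventually (\<lambda>u. f u \<in> Some -` U) F" by (blast intro: limitinD)
  then show "eventually (\<lambda>u. Some (f u) \<in> U) F" by simp
qed

lemma limitin_topEd_Some_Pair:
  assumes x: "x \<in> space M" and lim: "(g \<longlongrightarrow> c) F" and c: "c \<in> {0..<1}"
    and ev: "eventually (\<lambda>u. g u \<in> {0..<1}) F"
  shows "limitin (topEd M) (\<lambda>u. Some (x, g u)) (Some (x, c)) F"
proof (rule limitin_Some_topEd)
  show "limitin (topE M) (\<lambda>u. (x, g u)) (x, c) F"
    unfolding topE_def limitin_pairwise using x lim c ev by (simp add: o_def limitin_subtopology)
qed

lemma filtermap_at_left_shift: "filtermap (\<lambda>x. x - d) (at_left a) = at_left (a - d)"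
  for a d :: real
  by (simp add: filter_eq_iff eventually_filtermap eventually_at_filter filtermap_nhds_shift[symmetric])

lemma limitin_filtermap: "limitin X f l (filtermap g F) \<longleftrightarrow> limitin X (\<lambda>x. f (g x)) l F"
  by (simp add: limitin_def eventually_filtermap)

lemma limitin_at_right_shift:
  fixes a c :: real
  assumes "limitin X \<eta> l (at_right a)"
  shows "limitin X (\<lambda>v. \<eta> (v - c)) l (at_right (a + c))"
  using assms limitin_filtermap[of X \<eta> l "\<lambda>v. v - c" "at_right (a + c)"]
  by (simp add: filtermap_at_right_shift)

lemma limitin_at_left_shift:
  fixes a c :: real
  assumes "limitin X \<eta> l (at_left a)"
  shows "limitin X (\<lambda>v. \<eta> (v - c)) l (at_left (a + c))"
  using assms limitin_filtermap[of X \<eta> l "\<lambda>v. v - c" "at_left (a + c)"]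
  by (simp add: filtermap_at_left_shift)

section \<open>Operations on trajectories\<close>

lemma TrajD:
  assumes "\<eta> \<in> Traj M"
  shows "\<And>t. t \<ge> 0 \<Longrightarrow> \<eta> t \<in> insert None (Some ` space (Emeas M))"
    and "\<And>t. t < 0 \<Longrightarrow> \<eta> t = None"
    and "\<And>t t'. t \<ge> 0 \<Longrightarrow> \<eta> t = None \<Longrightarrow> t' \<ge> t \<Longrightarrow> \<eta> t' = None"
    and "\<And>t. t \<ge> 0 \<Longrightarrow> limitin (topEd M) \<eta> (\<eta> t) (at_right t)"
    and "\<And>t. t > 0 \<Longrightarrow> \<exists>l. limitin (topEd M) \<eta> l (at_left t)"
  using assms unfolding Traj_def cadlag_def by blast+

lemma Traj_delay_limits:
  assumes "\<eta> \<in> Traj M"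
  shows "0 \<le> u - c \<Longrightarrow> limitin (topEd M) (\<lambda>v. \<eta> (v - c)) (\<eta> (u - c)) (at_right u)"
    and "0 < u - c \<Longrightarrow> \<exists>l. limitin (topEd M) (\<lambda>v. \<eta> (v - c)) l (at_left u)"
  using limitin_at_right_shift[OF TrajD(4)[OF assms], of "u - c" c]
    limitin_at_left_shift[OF _, of _ \<eta> _ "u - c" c] TrajD(5)[OF assms, of "u - c"]
  by auto

definition shift_traj :: "real \<Rightarrow> (real \<Rightarrow> 'a option) \<Rightarrow> real \<Rightarrow> 'a option" where
  "shift_traj d \<eta> = (\<lambda>u. if u < 0 then None else \<eta> (u + d))"

text \<open>For \<open>s + d < 1\<close> every trajectory from \<open>(x, s)\<close> has this form: no jump occurs before time \<open>d\<close>.\<close>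
definition prefix_traj ::
    "'x \<Rightarrow> real \<Rightarrow> real \<Rightarrow> (real \<Rightarrow> ('x \<times> real) option) \<Rightarrow> real \<Rightarrow> ('x \<times> real) option" where
  "prefix_traj x s d \<eta> = (\<lambda>u. if u < 0 then None else if u < d then Some (x, s + u) else \<eta> (u - d))"

lemma shift_traj_in_Traj:
  assumes \<eta>: "\<eta> \<in> Traj M" and d: "0 \<le> d"
  shows "shift_traj d \<eta> \<in> Traj M"
  unfolding Traj_def cadlag_def mem_Collect_eq
proof (intro conjI allI impI)
  fix u :: real
  assume u: "0 \<le> u"
  show "shift_traj d \<eta> u \<in> insert None (Some ` space (Emeas M))"
    using TrajD(1)[OF \<eta>, of "u + d"] u d by (simp add: shift_traj_def)
  show "\<And>t'. shift_traj d \<eta> u = None \<Longrightarrow> u \<le> t' \<Longrightarrow> shift_traj d \<eta> t' = None"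
    using TrajD(3)[OF \<eta>, of "u + d"] u d by (auto simp: shift_traj_def)
  have "\<forall>\<^sub>F v in at_right u. \<eta> (v + d) = shift_traj d \<eta> v"
    using eventually_at_right_less[of u] by eventually_elim (use u in \<open>simp add: shift_traj_def\<close>)
  then show "limitin (topEd M) (shift_traj d \<eta>) (shift_traj d \<eta> u) (at_right u)"
    using Traj_delay_limits(1)[OF \<eta>, of u "-d"] u d
    by (auto simp: shift_traj_def intro: limitin_transform_eventually)
next
  fix u :: real
  assume u: "0 < u"
  have "\<forall>\<^sub>F v in at_left u. \<eta> (v + d) = shift_traj d \<eta> v"
    using eventually_at_left_real[OF u] by eventually_elim (simp add: shift_traj_def)
  then show "\<exists>l. limitin (topEd M) (shift_traj d \<eta>) l (at_left u)"
    using Traj_delay_limits(2)[OF \<eta>, of u "-d"] u d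
    by (auto intro: limitin_transform_eventually)
qed (simp add: shift_traj_def)

lemma prefix_traj_right_limit:
  assumes \<eta>: "\<eta> \<in> Traj M" and x: "x \<in> space M" and s: "0 \<le> s" and d: "0 < d" and sd: "s + d < 1"
    and u: "0 \<le> u"
  shows "limitin (topEd M) (prefix_traj x s d \<eta>) (prefix_traj x s d \<eta> u) (at_right u)"
proof (cases "u < d")
  case True
  have "limitin (topEd M) (\<lambda>v. Some (x, s + v)) (Some (x, s + u)) (at_right u)"
  proof (rule limitin_topEd_Some_Pair[OF x])
    show "((\<lambda>v. s + v) \<longlongrightarrow> s + u) (at_right u)" by (intro tendsto_intros)
    show "\<forall>\<^sub>F v in at_right u. s + v \<in> {0..<1}"
      using eventually_at_right_real[OF True] by eventually_elim (use u s sd in auto)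
  qed (use u s True sd in auto)
  moreover have "\<forall>\<^sub>F v in at_right u. Some (x, s + v) = prefix_traj x s d \<eta> v"
    using eventually_at_right_real[OF True] by eventually_elim (use u in \<open>auto simp: prefix_traj_def\<close>)
  ultimately show ?thesis
    using u True by (auto simp: prefix_traj_def intro: limitin_transform_eventually)
next
  case False
  have "\<forall>\<^sub>F v in at_right u. \<eta> (v - d) = prefix_traj x s d \<eta> v"
    using eventually_at_right_less[of u] by eventually_elim (use u False in \<open>simp add: prefix_traj_def\<close>)
  then show ?thesis
    using Traj_delay_limits(1)[OF \<eta>, of u d] u False
    by (auto simp: prefix_traj_def intro: limitin_transform_eventually)
qed

lemma prefix_traj_left_limit:
  assumes \<eta>: "\<eta> \<in> Traj M" and x: "x \<in> space M" and s: "0 \<le> s" and d: "0 < d" and sd: "s + d < 1"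
    and u: "0 < u"
  shows "\<exists>l. limitin (topEd M) (prefix_traj x s d \<eta>) l (at_left u)"
proof (cases "u \<le> d")
  case True
  have "limitin (topEd M) (\<lambda>v. Some (x, s + v)) (Some (x, s + u)) (at_left u)"
  proof (rule limitin_topEd_Some_Pair[OF x])
    show "((\<lambda>v. s + v) \<longlongrightarrow> s + u) (at_left u)" by (intro tendsto_intros)
    show "\<forall>\<^sub>F v in at_left u. s + v \<in> {0..<1}"
      using eventually_at_left_real[OF u] by eventually_elim (use u s True sd in auto)
  qed (use u s True sd in auto)
  moreover have "\<forall>\<^sub>F v in at_left u. Some (x, s + v) = prefix_traj x s d \<eta> v"
    using eventually_at_left_real[OF u] by eventually_elim (use True in \<open>auto simp: prefix_traj_def\<close>)
  ultimately show ?thesis by (blast intro: limitin_transform_eventually[rotated])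
next
  case False
  then have "d < u" by simp
  have "\<forall>\<^sub>F v in at_left u. \<eta> (v - d) = prefix_traj x s d \<eta> v"
    using eventually_at_left_real[OF \<open>d < u\<close>] by eventually_elim (use d in \<open>auto simp: prefix_traj_def\<close>)
  then show ?thesis
    using Traj_delay_limits(2)[OF \<eta>, of u d] False
    by (auto intro: limitin_transform_eventually)
qed

lemma prefix_traj_in_Traj:
  assumes \<eta>: "\<eta> \<in> Traj M" and x: "x \<in> space M" and s: "0 \<le> s" and d: "0 < d" and sd: "s + d < 1"
  shows "prefix_traj x s d \<eta> \<in> Traj M"
  unfolding Traj_def cadlag_def mem_Collect_eq
proof (intro conjI allI impI)
  fix u :: real
  assume u: "0 \<le> u"
  show "prefix_traj x s d \<eta> u \<in> insert None (Some ` space (Emeas M))"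
    using TrajD(1)[OF \<eta>, of "u - d"] u s sd x by (auto simp: prefix_traj_def space_Emeas)
  show "\<And>t'. prefix_traj x s d \<eta> u = None \<Longrightarrow> u \<le> t' \<Longrightarrow> prefix_traj x s d \<eta> t' = None"
    using TrajD(3)[OF \<eta>, of "u - d"] u d by (auto simp: prefix_traj_def split: if_splits)
  show "limitin (topEd M) (prefix_traj x s d \<eta>) (prefix_traj x s d \<eta> u) (at_right u)"
    by (rule prefix_traj_right_limit[OF \<eta> x s d sd u])
next
  fix u :: real
  assume "0 < u"
  then show "\<exists>l. limitin (topEd M) (prefix_traj x s d \<eta>) l (at_left u)"
    by (rule prefix_traj_left_limit[OF \<eta> x s d sd])
qed (simp add: prefix_traj_def)

section \<open>Cylinder events\<close>

definition Gm_generators :: "'x measure \<Rightarrow> (real \<Rightarrow> ('x \<times> real) option) set set" where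
  "Gm_generators M = {{\<omega> \<in> Traj M. \<omega> s \<in> A} | s A. 0 \<le> s \<and> A \<in> sets (Ed M)}"

definition cyl :: "'x measure \<Rightarrow> (real \<times> ('x \<times> real) option set) list \<Rightarrow> (real \<Rightarrow> ('x \<times> real) option) set" where
  "cyl M xs = {\<omega> \<in> Traj M. \<forall>(t, A) \<in> set xs. \<omega> t \<in> A}"

definition cyl_admissible :: "'x measure \<Rightarrow> (real \<times> ('x \<times> real) option set) list \<Rightarrow> bool" where
  "cyl_admissible M xs \<longleftrightarrow> sorted (map fst xs) \<and> (\<forall>(t, A) \<in> set xs. 0 \<le> t \<and> A \<in> sets (Ed M))"

definition Cyls :: "'x measure \<Rightarrow> (real \<Rightarrow> ('x \<times> real) option) set set" where
  "Cyls M = {cyl M xs | xs. cyl_admissible M xs}"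

lemma Gm_generators_Pow: "Gm_generators M \<subseteq> Pow (Traj M)"
  unfolding Gm_generators_def by auto

lemma space_Gm: "space (Gm M) = Traj M"
  unfolding Gm_def Gm_generators_def[symmetric] by (rule space_measure_of[OF Gm_generators_Pow])

lemma sets_Gm: "sets (Gm M) = sigma_sets (Traj M) (Gm_generators M)"
  unfolding Gm_def Gm_generators_def[symmetric] by (rule sets_measure_of[OF Gm_generators_Pow])

lemma evaluation_in_sets_Gm: "0 \<le> s \<Longrightarrow> A \<in> sets (Ed M) \<Longrightarrow> {\<omega> \<in> Traj M. \<omega> s \<in> A} \<in> sets (Gm M)"
  unfolding sets_Gm by (rule sigma_sets.Basic) (auto simp: Gm_generators_def)

lemma cyl_in_sets_Gm: "\<forall>(t, A) \<in> set xs. 0 \<le> t \<and> A \<in> sets (Ed M) \<Longrightarrow> cyl M xs \<in> sets (Gm M)"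
proof (induction xs)
  case Nil
  have "cyl M [] = space (Gm M)" by (simp add: cyl_def space_Gm)
  then show ?case by simp
next
  case (Cons p xs)
  obtain t A where p: "p = (t, A)" by force
  have "cyl M (p # xs) = {\<omega> \<in> Traj M. \<omega> t \<in> A} \<inter> cyl M xs" by (auto simp: cyl_def p)
  moreover have "{\<omega> \<in> Traj M. \<omega> t \<in> A} \<in> sets (Gm M)"
    using Cons.prems p by (intro evaluation_in_sets_Gm) auto
  ultimately show ?case using Cons by auto
qed

lemma sets_Gm_eq_sigma_Cyls: "sets (Gm M) = sigma_sets (Traj M) (Cyls M)"
proof
  have "Cyls M \<subseteq> sets (Gm M)" unfolding Cyls_def cyl_admissible_def using cyl_in_sets_Gm by blast
  from sets.sigma_sets_subset[OF this] show "sigma_sets (Traj M) (Cyls M) \<subseteq> sets (Gm M)"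
    by (simp add: space_Gm)
  have "Gm_generators M \<subseteq> Cyls M"
  proof
    fix G assume "G \<in> Gm_generators M"
    then obtain s A where "G = {\<omega> \<in> Traj M. \<omega> s \<in> A}" "0 \<le> s" "A \<in> sets (Ed M)"
      unfolding Gm_generators_def by blast
    then have "G = cyl M [(s, A)]" "cyl_admissible M [(s, A)]"
      by (auto simp: cyl_def cyl_admissible_def)
    then show "G \<in> Cyls M" unfolding Cyls_def by blast
  qed
  then show "sets (Gm M) \<subseteq> sigma_sets (Traj M) (Cyls M)"
    unfolding sets_Gm by (rule sigma_sets_mono')
qed

lemma Cyls_Pow: "Cyls M \<subseteq> Pow (Traj M)"
  unfolding Cyls_def cyl_def by auto

lemma Int_stable_Cyls: "Int_stable (Cyls M)"
proof (rule Int_stableI)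
  fix a b assume "a \<in> Cyls M" "b \<in> Cyls M"
  then obtain xs ys where a: "a = cyl M xs" "cyl_admissible M xs" and b: "b = cyl M ys" "cyl_admissible M ys"
    unfolding Cyls_def by blast
  have "a \<inter> b = cyl M (sort_key fst (xs @ ys))" using a b by (auto simp: cyl_def)
  moreover have "cyl_admissible M (sort_key fst (xs @ ys))"
    using a b by (auto simp: cyl_admissible_def)
  ultimately show "a \<inter> b \<in> Cyls M" unfolding Cyls_def by blast
qed

text \<open>Cylinders form an \<open>\<inter>\<close>-stable generator of \<open>G\<close>, so they determine finite measures on it.\<close>
lemma emeasure_eq_vimage_of_cyls:
  assumes sets_P: "sets P = sets (Gm M)" and sets_Q: "sets Q = sets (Gm M)"
    and \<Phi>: "\<Phi> \<in> Gm M \<rightarrow>\<^sub>M Gm M" and fin: "emeasure Q (Traj M) \<noteq> \<infinity>"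
    and cyl: "\<And>xs. cyl_admissible M xs \<Longrightarrow> emeasure P (\<Phi> -` cyl M xs \<inter> Traj M) = emeasure Q (cyl M xs)"
    and B: "B \<in> sets (Gm M)"
  shows "emeasure Q B = emeasure P (\<Phi> -` B \<inter> Traj M)"
proof -
  have space_P: "space P = Traj M" using sets_eq_imp_space_eq[OF sets_P] by (simp add: space_Gm)
  have \<Phi>_P: "\<Phi> \<in> P \<rightarrow>\<^sub>M Gm M" using \<Phi> by (simp add: measurable_cong_sets[OF sets_P refl])
  have distr: "emeasure (distr P (Gm M) \<Phi>) C = emeasure P (\<Phi> -` C \<inter> Traj M)"
    if "C \<in> sets (Gm M)" for C
    using emeasure_distr[OF \<Phi>_P that] by (simp add: space_P)
  have "Q = distr P (Gm M) \<Phi>"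
  proof (rule measure_eqI_generator_eq[OF Int_stable_Cyls Cyls_Pow])
    show "sets Q = sigma_sets (Traj M) (Cyls M)" and "sets (distr P (Gm M) \<Phi>) = sigma_sets (Traj M) (Cyls M)"
      using sets_Q by (simp_all add: sets_Gm_eq_sigma_Cyls)
    show "emeasure Q C = emeasure (distr P (Gm M) \<Phi>) C" if "C \<in> Cyls M" for C
    proof -
      from that obtain xs where C: "C = cyl M xs" and xs: "cyl_admissible M xs"
        unfolding Cyls_def by blast
      then have "C \<in> sets (Gm M)" by (auto simp: cyl_admissible_def intro: cyl_in_sets_Gm)
      with cyl[OF xs] show ?thesis by (simp add: C distr)
    qed
    have "cyl M [] = Traj M" and "cyl_admissible M []" by (auto simp: cyl_def cyl_admissible_def)
    then show "range (\<lambda>i::nat. Traj M) \<subseteq> Cyls M" unfolding Cyls_def by auto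
  qed (use fin in auto)
  with distr[OF B] show ?thesis by simp
qed

lemma sets_PP: "trajectory_laws M \<tau> PP \<Longrightarrow> z \<in> space (Emeas M) \<Longrightarrow> sets (PP z) = sets (Gm M)"
  unfolding trajectory_laws_def by blast

lemma emeasure_PP_cyl:
  "trajectory_laws M \<tau> PP \<Longrightarrow> z \<in> space (Emeas M) \<Longrightarrow> cyl_admissible M xs \<Longrightarrow>
    emeasure (PP z) (cyl M xs) = fdd M \<tau> (Some z) 0 xs"
  unfolding trajectory_laws_def cyl_admissible_def cyl_def by blast

lemma emeasure_PP_Traj: "trajectory_laws M \<tau> PP \<Longrightarrow> z \<in> space (Emeas M) \<Longrightarrow> emeasure (PP z) (Traj M) = 1"
  using emeasure_PP_cyl[of M \<tau> PP z "[]"] by (simp add: cyl_def cyl_admissible_def)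

lemma measurable_shift_traj:
  assumes d: "0 \<le> d"
  shows "shift_traj d \<in> Gm M \<rightarrow>\<^sub>M Gm M"
proof (rule measurable_sigma_sets[OF sets_Gm Gm_generators_Pow])
  show "shift_traj d \<in> space (Gm M) \<rightarrow> Traj M" using shift_traj_in_Traj[OF _ d] by (auto simp: space_Gm)
  fix G assume "G \<in> Gm_generators M"
  then obtain u A where G: "G = {\<omega> \<in> Traj M. \<omega> u \<in> A}" "0 \<le> u" "A \<in> sets (Ed M)"
    unfolding Gm_generators_def by blast
  then have "shift_traj d -` G \<inter> space (Gm M) = {\<eta> \<in> Traj M. \<eta> (u + d) \<in> A}"
    using shift_traj_in_Traj[OF _ d] by (auto simp: space_Gm shift_traj_def)
  also have "\<dots> \<in> sets (Gm M)" using G d by (intro evaluation_in_sets_Gm) auto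
  finally show "shift_traj d -` G \<inter> space (Gm M) \<in> sets (Gm M)" .
qed

lemma measurable_prefix_traj:
  assumes x: "x \<in> space M" and s: "0 \<le> s" and d: "0 < d" and sd: "s + d < 1"
  shows "prefix_traj x s d \<in> Gm M \<rightarrow>\<^sub>M Gm M"
proof (rule measurable_sigma_sets[OF sets_Gm Gm_generators_Pow])
  show "prefix_traj x s d \<in> space (Gm M) \<rightarrow> Traj M"
    using prefix_traj_in_Traj[OF _ x s d sd] by (auto simp: space_Gm)
  fix G assume "G \<in> Gm_generators M"
  then obtain u A where G: "G = {\<omega> \<in> Traj M. \<omega> u \<in> A}" "0 \<le> u" "A \<in> sets (Ed M)"
    unfolding Gm_generators_def by blast
  show "prefix_traj x s d -` G \<inter> space (Gm M) \<in> sets (Gm M)"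
  proof (cases "u < d")
    case True
    then have "prefix_traj x s d -` G \<inter> space (Gm M) = (if Some (x, s + u) \<in> A then space (Gm M) else {})"
      using G prefix_traj_in_Traj[OF _ x s d sd] by (auto simp: space_Gm prefix_traj_def)
    then show ?thesis by simp
  next
    case False
    then have "prefix_traj x s d -` G \<inter> space (Gm M) = {\<eta> \<in> Traj M. \<eta> (u - d) \<in> A}"
      using G prefix_traj_in_Traj[OF _ x s d sd] by (auto simp: space_Gm prefix_traj_def)
    also have "\<dots> \<in> sets (Gm M)" using G False by (intro evaluation_in_sets_Gm) auto
    finally show ?thesis .
  qed
qed

section \<open>Laws of shifted and prefixed trajectories\<close>

lemma sorted_map_fst_mono:
  "mono f \<Longrightarrow> sorted (map fst xs) \<Longrightarrow> sorted (map fst (map (\<lambda>(u, A). (f u, A)) xs))"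
  by (induction xs) (auto simp: monoD)

lemma ball_set_map_fst:
  "(\<forall>(u, A) \<in> set (map (\<lambda>(u, A). (f u, A)) xs). P u A) \<longleftrightarrow> (\<forall>(u, A) \<in> set xs. P (f u) A)"
  by (induction xs) auto

lemma vimage_shift_traj_cyl:
  assumes xs: "cyl_admissible M xs" and d: "0 \<le> d"
  shows "shift_traj d -` cyl M xs \<inter> Traj M = cyl M (map (\<lambda>(u, A). (u + d, A)) xs)"
  using xs shift_traj_in_Traj[OF _ d]
  by (fastforce simp: cyl_def cyl_admissible_def shift_traj_def)

lemma fdd_shift_start:
  "fdd M \<tau> (Some (x, s)) 0 (map (\<lambda>(u, A). (u + d, A)) xs) = fdd M \<tau> (Some (x, s + d)) 0 xs"
proof -
  have "fdd M \<tau> (Some (x, s + d)) 0 xs = fdd M \<tau> (Some (x, s + d)) (0 + d) (map (\<lambda>(u, A). (u + d, A)) xs)"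
    by (rule fdd_translate)
  also have "\<dots> = fdd M \<tau> (Some (x, s)) 0 (map (\<lambda>(u, A). (u + d, A)) xs)"
    by (rule fdd_time_origin) simp
  finally show ?thesis by simp
qed

lemma emeasure_PP_shift_traj:
  assumes tl: "trajectory_laws M \<tau> PP" and x: "x \<in> space M" and t: "t \<in> {0..<1}" and s: "s \<in> {0..<1}"
    and ts: "t \<le> s" and B: "B \<in> sets (Gm M)"
  shows "emeasure (PP (x, s)) B = emeasure (PP (x, t)) (shift_traj (s - t) -` B \<inter> Traj M)"
proof (rule emeasure_eq_vimage_of_cyls[OF sets_PP[OF tl] sets_PP[OF tl] measurable_shift_traj _ _ B])
  show zt: "(x, t) \<in> space (Emeas M)" and zs: "(x, s) \<in> space (Emeas M)"
    using x s t by (auto simp: space_Emeas)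
  show "emeasure (PP (x, s)) (Traj M) \<noteq> \<infinity>" using emeasure_PP_Traj[OF tl zs] by simp
  fix xs assume xs: "cyl_admissible M xs"
  have "cyl_admissible M (map (\<lambda>(u, A). (u + (s - t), A)) xs)"
    using xs ts sorted_map_fst_mono[of "\<lambda>u. u + (s - t)" xs]
    by (auto simp: cyl_admissible_def mono_def)
  then show "emeasure (PP (x, t)) (shift_traj (s - t) -` cyl M xs \<inter> Traj M) = emeasure (PP (x, s)) (cyl M xs)"
    using xs ts by (simp add: vimage_shift_traj_cyl emeasure_PP_cyl[OF tl zt] emeasure_PP_cyl[OF tl zs]
        fdd_shift_start)
qed (use ts in simp)

lemma fdd_prefix:
  assumes lmp: "lmp M \<tau>" and x: "x \<in> space M" and s: "0 \<le> s" and sd: "s + d < 1"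
  shows "sorted (map fst xs) \<Longrightarrow> \<forall>(u, A) \<in> set xs. t0 \<le> u \<and> A \<in> sets (Ed M) \<Longrightarrow> 0 \<le> t0 \<Longrightarrow> t0 \<le> d \<Longrightarrow>
    fdd M \<tau> (Some (x, s + t0)) t0 xs =
      (if \<forall>(u, A) \<in> set xs. u < d \<longrightarrow> Some (x, s + u) \<in> A
       then fdd M \<tau> (Some (x, s + d)) 0 (map (\<lambda>(u, A). (u - d, A)) (filter (\<lambda>p. d \<le> fst p) xs))
       else 0)"
proof (induction xs arbitrary: t0)
  case (Cons p xs)
  obtain u A where p: "p = (u, A)" by force
  have sorted: "sorted (map fst xs)" and ge_u: "\<forall>q \<in> set xs. u \<le> fst q"
    using Cons.prems(1) by (auto simp: p)
  have A: "A \<in> sets (Ed M)" and t0_u: "t0 \<le> u" using Cons.prems(2) by (auto simp: p)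
  have xs: "\<forall>(v, B) \<in> set xs. u \<le> v \<and> B \<in> sets (Ed M)" using Cons.prems(2) ge_u by auto
  show ?case
  proof (cases "d \<le> u")
    case True
    with ge_u have "\<forall>q \<in> set (p # xs). d \<le> fst q" by (auto simp: p)
    moreover have "fdd M \<tau> (Some (x, s + t0)) t0 (p # xs) = fdd M \<tau> (Some (x, s + d)) d (p # xs)"
      by (rule fdd_time_origin) simp
    moreover have "\<dots> = fdd M \<tau> (Some (x, s + d)) (d + - d) (map (\<lambda>(u, A). (u + - d, A)) (p # xs))"
      by (rule fdd_translate)
    ultimately show ?thesis by auto
  next
    case False
    have "(\<lambda>y. fdd M \<tau> y u xs) \<in> borel_measurable (Ed M)"
      by (rule measurable_fdd[OF lmp]) (use xs in auto)
    with A have "(\<lambda>y. indicator A y * fdd M \<tau> y u xs) \<in> borel_measurable (Ed M)"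
      by measurable
    moreover have "Some (x, s + u) \<in> space (Ed M)"
      using x s False sd t0_u Cons.prems(3) by (auto simp: space_Ed space_Emeas)
    moreover have "Pd M \<tau> (u - t0) (Some (x, s + t0)) = return (Ed M) (Some (x, s + u))"
      using Pd_Some_eq_return[OF lmp x, of "s + t0" "u - t0"] s False sd t0_u Cons.prems(3) by simp
    ultimately have "fdd M \<tau> (Some (x, s + t0)) t0 (p # xs) = indicator A (Some (x, s + u)) * fdd M \<tau> (Some (x, s + u)) u xs"
      by (simp add: p nn_integral_return)
    with Cons.IH[OF sorted xs] t0_u Cons.prems(3) False show ?thesis
      by (simp add: p split: split_indicator)
  qed
qed simp

lemma vimage_prefix_traj_cyl:
  assumes x: "x \<in> space M" and s: "0 \<le> s" and d: "0 < d" and sd: "s + d < 1"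
    and xs: "cyl_admissible M xs"
  shows "prefix_traj x s d -` cyl M xs \<inter> Traj M =
    (if \<forall>(u, A) \<in> set xs. u < d \<longrightarrow> Some (x, s + u) \<in> A
     then cyl M (map (\<lambda>(u, A). (u - d, A)) (filter (\<lambda>p. d \<le> fst p) xs)) else {})"
proof (rule set_eqI)
  fix \<eta>
  have "prefix_traj x s d \<eta> u \<in> A \<longleftrightarrow> (if u < d then Some (x, s + u) \<in> A else \<eta> (u - d) \<in> A)"
    if "(u, A) \<in> set xs" for u A
    using xs that by (auto simp: cyl_admissible_def prefix_traj_def)
  then have "(\<forall>(u, A) \<in> set xs. prefix_traj x s d \<eta> u \<in> A) \<longleftrightarrow>
      (\<forall>(u, A) \<in> set xs. if u < d then Some (x, s + u) \<in> A else \<eta> (u - d) \<in> A)"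
    by auto
  also have "\<dots> \<longleftrightarrow> (\<forall>(u, A) \<in> set xs. u < d \<longrightarrow> Some (x, s + u) \<in> A) \<and>
      (\<forall>(u, A) \<in> set (map (\<lambda>(u, A). (u - d, A)) (filter (\<lambda>p. d \<le> fst p) xs)). \<eta> u \<in> A)"
    unfolding ball_set_map_fst by (auto simp: not_less)
  finally show "\<eta> \<in> prefix_traj x s d -` cyl M xs \<inter> Traj M \<longleftrightarrow>
      \<eta> \<in> (if \<forall>(u, A) \<in> set xs. u < d \<longrightarrow> Some (x, s + u) \<in> A
           then cyl M (map (\<lambda>(u, A). (u - d, A)) (filter (\<lambda>p. d \<le> fst p) xs)) else {})"
    using prefix_traj_in_Traj[OF _ x s d sd] by (auto simp: cyl_def)
qed

lemma emeasure_PP_prefix_traj: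
  assumes lmp: "lmp M \<tau>" and tl: "trajectory_laws M \<tau> PP" and x: "x \<in> space M"
    and s: "s \<in> {0..<1}" and t: "t \<in> {0..<1}" and st: "s < t" and B: "B \<in> sets (Gm M)"
  shows "emeasure (PP (x, s)) B = emeasure (PP (x, t)) (prefix_traj x s (t - s) -` B \<inter> Traj M)"
proof -
  define d where "d = t - s"
  have s0: "0 \<le> s" and d: "0 < d" and sd: "s + d < 1" and t_eq: "t = s + d"
    using s t st by (auto simp: d_def)
  show ?thesis unfolding d_def[symmetric]
  proof (rule emeasure_eq_vimage_of_cyls[OF sets_PP[OF tl] sets_PP[OF tl] measurable_prefix_traj[OF x s0 d sd] _ _ B])
    show zt: "(x, t) \<in> space (Emeas M)" and zs: "(x, s) \<in> space (Emeas M)"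
      using x s t by (auto simp: space_Emeas)
    show "emeasure (PP (x, s)) (Traj M) \<noteq> \<infinity>" using emeasure_PP_Traj[OF tl zs] by simp
    fix xs assume xs: "cyl_admissible M xs"
    define xs' where "xs' = map (\<lambda>(u, A). (u - d, A)) (filter (\<lambda>p. d \<le> fst p) xs)"
    define cond where "cond \<longleftrightarrow> (\<forall>(u, A) \<in> set xs. u < d \<longrightarrow> Some (x, s + u) \<in> A)"
    have xs': "cyl_admissible M xs'"
      using xs sorted_map_fst_mono[of "\<lambda>u. u - d" "filter (\<lambda>p. d \<le> fst p) xs"] sorted_filter[of fst xs]
      by (auto simp: cyl_admissible_def xs'_def mono_def)
    have "fdd M \<tau> (Some (x, s + 0)) 0 xs = (if cond then fdd M \<tau> (Some (x, s + d)) 0 xs' else 0)"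
      unfolding xs'_def cond_def
      by (rule fdd_prefix[OF lmp x s0 sd]) (use xs d in \<open>auto simp: cyl_admissible_def\<close>)
    then have "emeasure (PP (x, s)) (cyl M xs) = (if cond then emeasure (PP (x, t)) (cyl M xs') else 0)"
      by (simp add: emeasure_PP_cyl[OF tl zs xs] emeasure_PP_cyl[OF tl zt xs'] t_eq[symmetric])
    then show "emeasure (PP (x, t)) (prefix_traj x s d -` cyl M xs \<inter> Traj M) = emeasure (PP (x, s)) (cyl M xs)"
      by (simp add: vimage_prefix_traj_cyl[OF x s0 d sd xs] cond_def[symmetric] xs'_def[symmetric])
  qed
qed

lemma rel_d_refl:
  assumes "equiv (space (Emeas M)) S" and "v \<in> insert None (Some ` space (Emeas M))"
  shows "rel_d S v v"
  using assms by (auto simp: rel_d_def equiv_def refl_on_def)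

lemma R_closed_antimono:
  assumes "R \<subseteq> S" and "R_closed M S B"
  shows "R_closed M R B"
  unfolding R_closed_def
proof (intro ballI impI)
  fix \<omega> \<omega>' assume "\<omega> \<in> B" "\<omega>' \<in> Traj M" and "\<forall>t\<ge>0. rel_d R (\<omega> t) (\<omega>' t)"
  moreover have "rel_d S a b" if "rel_d R a b" for a b
    using that assms(1) by (auto simp: rel_d_def)
  ultimately show "\<omega>' \<in> B" using assms(2) unfolding R_closed_def by blast
qed

lemma R_closed_vimage:
  assumes B: "R_closed M S B" and \<Phi>: "\<And>\<omega>. \<omega> \<in> Traj M \<Longrightarrow> \<Phi> \<omega> \<in> Traj M"
    and related: "\<And>\<omega> \<omega>' t. \<forall>t\<ge>0. rel_d S (\<omega> t) (\<omega>' t) \<Longrightarrow> 0 \<le> t \<Longrightarrow> rel_d S (\<Phi> \<omega> t) (\<Phi> \<omega>' t)"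
  shows "R_closed M S (\<Phi> -` B \<inter> Traj M)"
  using B unfolding R_closed_def by (blast intro: \<Phi> related)

lemma R_closed_vimage_shift_traj:
  assumes "R_closed M S B" and d: "0 \<le> d"
  shows "R_closed M S (shift_traj d -` B \<inter> Traj M)"
  using assms(1) shift_traj_in_Traj[OF _ d]
proof (rule R_closed_vimage)
  fix \<omega> \<omega>' :: "real \<Rightarrow> ('a \<times> real) option" and u :: real
  assume "\<forall>t\<ge>0. rel_d S (\<omega> t) (\<omega>' t)" and u: "0 \<le> u"
  then have "rel_d S (\<omega> (u + d)) (\<omega>' (u + d))" using d by simp
  then show "rel_d S (shift_traj d \<omega> u) (shift_traj d \<omega>' u)" using u by (simp add: shift_traj_def)
qed

lemma R_closed_vimage_prefix_traj:
  assumes S: "equiv (space (Emeas M)) S" and "R_closed M S B"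
    and x: "x \<in> space M" and s: "0 \<le> s" and d: "0 < d" and sd: "s + d < 1"
  shows "R_closed M S (prefix_traj x s d -` B \<inter> Traj M)"
  using assms(2) prefix_traj_in_Traj[OF _ x s d sd]
proof (rule R_closed_vimage)
  fix \<omega> \<omega>' :: "real \<Rightarrow> ('a \<times> real) option" and u :: real
  assume "\<forall>t\<ge>0. rel_d S (\<omega> t) (\<omega>' t)" and u: "0 \<le> u"
  moreover have "Some (x, s + u) \<in> insert None (Some ` space (Emeas M))" if "u < d"
    using x s u sd that by (auto simp: space_Emeas)
  ultimately show "rel_d S (prefix_traj x s d \<omega> u) (prefix_traj x s d \<omega>' u)"
    by (auto simp: prefix_traj_def rel_d_refl[OF S])
qed

lemma vimage_prefix_traj_eq:
  assumes S: "equiv (space (Emeas M)) S" and B: "R_closed M S B"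
    and x: "x \<in> space M" and y: "y \<in> space M" and s: "0 \<le> s" and d: "0 < d" and sd: "s + d < 1"
    and related: "\<And>u. 0 \<le> u \<Longrightarrow> u < d \<Longrightarrow> ((x, s + u), (y, s + u)) \<in> S"
  shows "prefix_traj x s d -` B \<inter> Traj M = prefix_traj y s d -` B \<inter> Traj M"
proof -
  have "prefix_traj x' s d -` B \<inter> Traj M \<subseteq> prefix_traj y' s d -` B \<inter> Traj M"
    if y': "y' \<in> space M" and related': "\<And>u. 0 \<le> u \<Longrightarrow> u < d \<Longrightarrow> ((x', s + u), (y', s + u)) \<in> S"
    for x' y'
  proof
    fix \<omega> assume \<omega>: "\<omega> \<in> prefix_traj x' s d -` B \<inter> Traj M"
    have "prefix_traj y' s d \<omega> \<in> B"
    proof (rule B[unfolded R_closed_def, rule_format])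
      show "prefix_traj x' s d \<omega> \<in> B" using \<omega> by simp
      show "prefix_traj y' s d \<omega> \<in> Traj M" using \<omega> by (simp add: prefix_traj_in_Traj[OF _ y' s d sd])
      show "rel_d S (prefix_traj x' s d \<omega> u) (prefix_traj y' s d \<omega> u)" if u: "0 \<le> u" for u
      proof (cases "u < d")
        case False
        then show ?thesis
          using u \<omega> TrajD(1)[of \<omega> M "u - d"] by (simp add: prefix_traj_def rel_d_refl[OF S])
      qed (use related' u in \<open>simp add: prefix_traj_def rel_d_def\<close>)
    qed
    with \<omega> show "\<omega> \<in> prefix_traj y' s d -` B \<inter> Traj M" by simp
  qed
  moreover have "((y, s + u), (x, s + u)) \<in> S" if "0 \<le> u" "u < d" for u
    using S related[OF that] by (auto simp: equiv_def elim: symE)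
  ultimately show ?thesis using x y related by (meson subset_antisym)
qed

lemma time_coherentD:
  "time_coherent S \<Longrightarrow> 0 \<le> t \<Longrightarrow> t < 1 \<Longrightarrow> ((x, t), (y, t)) \<in> S \<Longrightarrow> 0 \<le> s \<Longrightarrow> s < 1
    \<Longrightarrow> ((x, s), (y, s)) \<in> S"
  unfolding time_coherent_def by blast

lemma equiv_Inter:
  assumes "F \<noteq> {}" and "\<And>S. S \<in> F \<Longrightarrow> equiv A S"
  shows "equiv A (\<Inter>F)"
proof (rule equivI)
  show "\<Inter>F \<subseteq> A \<times> A" and "refl_on A (\<Inter>F)"
    using assms by (auto simp: equiv_def refl_on_def)
  show "sym (\<Inter>F)"
    using assms(2) by (intro symI) (meson InterE InterI equivE symD)
  show "trans (\<Inter>F)"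
    using assms(2) by (intro transI) (meson InterE InterI equivE transD)
qed

lemma time_coherent_Inter: "(\<And>S. S \<in> F \<Longrightarrow> time_coherent S) \<Longrightarrow> time_coherent (\<Inter>F)"
  unfolding time_coherent_def by blast

lemma time_closure_least:
  "equiv (space (Emeas M)) S \<Longrightarrow> time_coherent S \<Longrightarrow> R \<subseteq> S \<Longrightarrow> time_closure M R \<subseteq> S"
  unfolding time_closure_def by blast

lemma
  assumes "R \<subseteq> space (Emeas M) \<times> space (Emeas M)"
  shows equiv_time_closure: "equiv (space (Emeas M)) (time_closure M R)"
    and time_coherent_time_closure: "time_coherent (time_closure M R)"
    and subset_time_closure: "R \<subseteq> time_closure M R"
proof -
  let ?E = "space (Emeas M)"
  have "?E \<times> ?E \<in> {S. equiv ?E S \<and> time_coherent S \<and> R \<subseteq> S}"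
    using assms by (auto simp: equiv_def refl_on_def sym_def trans_def time_coherent_def space_Emeas)
  then show "equiv ?E (time_closure M R)"
    unfolding time_closure_def by (intro equiv_Inter) auto
  show "time_coherent (time_closure M R)"
    unfolding time_closure_def by (intro time_coherent_Inter) auto
  show "R \<subseteq> time_closure M R"
    unfolding time_closure_def by blast
qed

definition bisim_pairs :: "'x measure \<Rightarrow> (nat \<Rightarrow> 'x \<Rightarrow> bool)
      \<Rightarrow> ('x \<times> real \<Rightarrow> (real \<Rightarrow> ('x \<times> real) option) measure)
      \<Rightarrow> (('x \<times> real) \<times> ('x \<times> real)) set \<Rightarrow> (('x \<times> real) \<times> ('x \<times> real)) set" where
  "bisim_pairs M lab PP S = {(z, w) \<in> S. lmp_obs lab z = lmp_obs lab w \<and>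
       (\<forall>B \<in> sets (Gm M). R_closed M S B \<longrightarrow> emeasure (PP z) B = emeasure (PP w) B)}"

lemma is_bisimulation_iff_subset_bisim_pairs:
  "is_bisimulation M lab PP S \<longleftrightarrow> equiv (space (Emeas M)) S \<and> S \<subseteq> bisim_pairs M lab PP S"
  unfolding is_bisimulation_def bisim_pairs_def by auto

lemma equiv_bisim_pairs:
  assumes "equiv A S"
  shows "equiv A (bisim_pairs M lab PP S)"
proof (rule equivI)
  show "bisim_pairs M lab PP S \<subseteq> A \<times> A"
    using equiv_type[OF assms] by (auto simp: bisim_pairs_def)
  show "refl_on A (bisim_pairs M lab PP S)"
    using assms by (auto simp: bisim_pairs_def equiv_def refl_on_def)
  show "sym (bisim_pairs M lab PP S)"
    using assms unfolding bisim_pairs_def equiv_def by (auto intro!: symI elim: symE)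
  show "trans (bisim_pairs M lab PP S)"
    using assms unfolding bisim_pairs_def equiv_def by (auto intro!: transI elim: transE)
qed

lemma subset_bisim_pairs:
  assumes "is_bisimulation M lab PP R" and "R \<subseteq> S"
  shows "R \<subseteq> bisim_pairs M lab PP S"
  using assms R_closed_antimono[OF \<open>R \<subseteq> S\<close>] by (fastforce simp: is_bisimulation_def bisim_pairs_def)

lemma emeasure_PP_eq_later:
  assumes tl: "trajectory_laws M \<tau> PP" and x: "x \<in> space M" and y: "y \<in> space M"
    and t: "t \<in> {0..<1}" and s: "s \<in> {0..<1}" and ts: "t \<le> s"
    and agree: "\<And>C. C \<in> sets (Gm M) \<Longrightarrow> R_closed M S C \<Longrightarrow> emeasure (PP (x, t)) C = emeasure (PP (y, t)) C"
    and B: "B \<in> sets (Gm M)" and closed: "R_closed M S B"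
  shows "emeasure (PP (x, s)) B = emeasure (PP (y, s)) B"
proof -
  define C where "C = shift_traj (s - t) -` B \<inter> Traj M"
  have "shift_traj (s - t) \<in> Gm M \<rightarrow>\<^sub>M Gm M" using ts by (simp add: measurable_shift_traj)
  from measurable_sets[OF this B] have "C \<in> sets (Gm M)" by (simp add: C_def space_Gm)
  moreover have "R_closed M S C" unfolding C_def using closed ts by (simp add: R_closed_vimage_shift_traj)
  ultimately have "emeasure (PP (x, t)) C = emeasure (PP (y, t)) C" by (rule agree)
  then show ?thesis
    using emeasure_PP_shift_traj[OF tl x t s ts B] emeasure_PP_shift_traj[OF tl y t s ts B]
    by (simp add: C_def)
qed

lemma emeasure_PP_eq_earlier:
  assumes lmp: "lmp M \<tau>" and tl: "trajectory_laws M \<tau> PP" and S: "equiv (space (Emeas M)) S"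
    and x: "x \<in> space M" and y: "y \<in> space M"
    and s: "s \<in> {0..<1}" and t: "t \<in> {0..<1}" and st: "s < t"
    and related: "\<And>u. s \<le> u \<Longrightarrow> u < t \<Longrightarrow> ((x, u), (y, u)) \<in> S"
    and agree: "\<And>C. C \<in> sets (Gm M) \<Longrightarrow> R_closed M S C \<Longrightarrow> emeasure (PP (x, t)) C = emeasure (PP (y, t)) C"
    and B: "B \<in> sets (Gm M)" and closed: "R_closed M S B"
  shows "emeasure (PP (x, s)) B = emeasure (PP (y, s)) B"
proof -
  have s0: "0 \<le> s" and d: "0 < t - s" and sd: "s + (t - s) < 1" using s t st by auto
  define C where "C = prefix_traj x s (t - s) -` B \<inter> Traj M"
  have C_y: "C = prefix_traj y s (t - s) -` B \<inter> Traj M"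
    unfolding C_def using related by (intro vimage_prefix_traj_eq[OF S closed x y s0 d sd]) auto
  from measurable_sets[OF measurable_prefix_traj[OF x s0 d sd] B] have "C \<in> sets (Gm M)"
    by (simp add: C_def space_Gm)
  moreover have "R_closed M S C"
    unfolding C_def by (rule R_closed_vimage_prefix_traj[OF S closed x s0 d sd])
  ultimately have "emeasure (PP (x, t)) C = emeasure (PP (y, t)) C" by (rule agree)
  then show ?thesis
    using emeasure_PP_prefix_traj[OF lmp tl x s t st B, folded C_def]
      emeasure_PP_prefix_traj[OF lmp tl y s t st B, folded C_y]
    by simp
qed

lemma time_coherent_bisim_pairs:
  assumes lmp: "lmp M \<tau>" and tl: "trajectory_laws M \<tau> PP"
    and S: "equiv (space (Emeas M)) S" and coherent: "time_coherent S"
  shows "time_coherent (bisim_pairs M lab PP S)"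
  unfolding time_coherent_def
proof (intro allI impI)
  fix x y and t s :: real
  assume "0 \<le> t \<and> t < 1 \<and> ((x, t), (y, t)) \<in> bisim_pairs M lab PP S" and s': "0 \<le> s \<and> s < 1"
  then have t: "t \<in> {0..<1}" and s: "s \<in> {0..<1}" and xy: "((x, t), (y, t)) \<in> S"
    and obs: "lmp_obs lab (x, t) = lmp_obs lab (y, t)"
    and agree: "\<And>C. C \<in> sets (Gm M) \<Longrightarrow> R_closed M S C \<Longrightarrow> emeasure (PP (x, t)) C = emeasure (PP (y, t)) C"
    by (auto simp: bisim_pairs_def)
  have x: "x \<in> space M" and y: "y \<in> space M"
    using equiv_type[OF S] xy by (auto simp: space_Emeas)
  have related: "((x, u), (y, u)) \<in> S" if "0 \<le> u" "u < 1" for u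
    using time_coherentD[OF coherent _ _ xy] t that by auto
  have "emeasure (PP (x, s)) B = emeasure (PP (y, s)) B"
    if B: "B \<in> sets (Gm M)" and closed: "R_closed M S B" for B
  proof (cases "t \<le> s")
    case True
    then show ?thesis by (rule emeasure_PP_eq_later[OF tl x y t s _ agree B closed])
  next
    case False
    then have "s < t" by simp
    with related s t show ?thesis by (intro emeasure_PP_eq_earlier[OF lmp tl S x y s t _ _ agree B closed]) auto
  qed
  moreover have "lmp_obs lab (x, s) = lmp_obs lab (y, s)"
    using obs by (simp add: lmp_obs_def)
  ultimately show "((x, s), (y, s)) \<in> bisim_pairs M lab PP S"
    using related s' by (simp add: bisim_pairs_def)
qed

theorem mainTheorem10:
  fixes M :: "'x measure" and \<tau> :: "'x \<Rightarrow> 'x measure" and lab :: "nat \<Rightarrow> 'x \<Rightarrow> bool"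
    and PP :: "'x \<times> real \<Rightarrow> (real \<Rightarrow> ('x \<times> real) option) measure"
    and R :: "(('x \<times> real) \<times> ('x \<times> real)) set"
  assumes "lmp M \<tau>"
    and "trajectory_laws M \<tau> PP"
    and "is_bisimulation M lab PP R"
  shows "is_bisimulation M lab PP (time_closure M R)"
proof -
  let ?E = "space (Emeas M)" and ?S = "time_closure M R"
  have "R \<subseteq> ?E \<times> ?E"
    using assms(3) by (auto simp: is_bisimulation_def dest: equiv_type)
  then have S: "equiv ?E ?S" and coherent: "time_coherent ?S" and "R \<subseteq> ?S"
    by (rule equiv_time_closure time_coherent_time_closure subset_time_closure)+
  have "?S \<subseteq> bisim_pairs M lab PP ?S"
  proof (rule time_closure_least)
    show "equiv ?E (bisim_pairs M lab PP ?S)" using S by (rule equiv_bisim_pairs)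
    show "time_coherent (bisim_pairs M lab PP ?S)"
      using assms(1,2) S coherent by (rule time_coherent_bisim_pairs)
    show "R \<subseteq> bisim_pairs M lab PP ?S" using assms(3) \<open>R \<subseteq> ?S\<close> by (rule subset_bisim_pairs)
  qed
  with S show ?thesis by (simp add: is_bisimulation_iff_subset_bisim_pairs)
qed

end
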